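(* Let $X$ be a topological space, $\sigma : X\to X$ a homeomorphism, and $\widetilde{\sigma}(f) = f\circ\sigma^{-1}$ the induced automorphism of $C(X)$. Let $A$ be a non-zero subalgebra of $C(X)$ invariant under $\widetilde{\sigma}$ and $\widetilde{\sigma}^{-1}$, which separates the points of $X$ and is such that every non-empty open set $U\subseteq X$ is a domain of uniqueness for $A$. Then $A$ is maximal abelian in $A\rtimes_{\widetilde{\sigma}}\mathbb{Z}$ if and only if $\sigma$ is not of finite order (i.e. $\sigma^n\neq \mathrm{id}_X$ for every non-zero integer $n$).
   Context: A non-empty subset $S\subseteq X$ is a domain of uniqueness for $A$ if every function in $A$ vanishing on $S$ vanishes on all of $X$. The crossed product $A \rtimes_{\widetilde{\sigma}} \mathbb{Z}$ is the set of finitely supported functions $\mathbb{Z}\to A$, written $\sum_n f_n\delta^n$, with pointwise linear operations and multiplication determined by $(f_n\delta^n)*(g_m\delta^m)=f_n\,\widetilde{\sigma}^n(g_m)\,\delta^{n+m}$; $A$ is embedded as $\{f_0\delta^0\}$. *)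

theory Defs
  imports Complex_Main
begin

definition Cfun :: "('a::topological_space \<Rightarrow> complex) set" where
  "Cfun = {f. continuous_on UNIV f}"

definition int_pow :: "('a \<Rightarrow> 'a) \<Rightarrow> int \<Rightarrow> 'a \<Rightarrow> 'a" where
  "int_pow \<sigma> n = (if n \<ge> 0 then \<sigma> ^^ nat n else (inv \<sigma>) ^^ nat (- n))"

definition sigt_pow :: "('a \<Rightarrow> 'a) \<Rightarrow> int \<Rightarrow> ('a \<Rightarrow> complex) \<Rightarrow> ('a \<Rightarrow> complex)" where
  "sigt_pow \<sigma> n f = f \<circ> int_pow \<sigma> (- n)"

definition subalgebra :: "('a::topological_space \<Rightarrow> complex) set \<Rightarrow> bool" where
  "subalgebra A \<longleftrightarrow> A \<subseteq> Cfun \<and> (\<lambda>x. 0) \<in> A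
     \<and> (\<forall>f\<in>A. \<forall>g\<in>A. (\<lambda>x. f x + g x) \<in> A)
     \<and> (\<forall>c::complex. \<forall>f\<in>A. (\<lambda>x. c * f x) \<in> A)
     \<and> (\<forall>f\<in>A. \<forall>g\<in>A. (\<lambda>x. f x * g x) \<in> A)"

definition separates_points :: "('a \<Rightarrow> complex) set \<Rightarrow> bool" where
  "separates_points A \<longleftrightarrow> (\<forall>x y. x \<noteq> y \<longrightarrow> (\<exists>f\<in>A. f x \<noteq> f y))"

definition domain_of_uniqueness :: "'a set \<Rightarrow> ('a \<Rightarrow> complex) set \<Rightarrow> bool" where
  "domain_of_uniqueness S A \<longleftrightarrow> S \<noteq> {} \<and>
     (\<forall>f\<in>A. (\<forall>x\<in>S. f x = 0) \<longrightarrow> (\<forall>x. f x = 0))"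

text \<open>Crossed product A x| Z: finitely supported functions Z -> A.\<close>
definition crossed_product :: "('a \<Rightarrow> complex) set \<Rightarrow> (int \<Rightarrow> 'a \<Rightarrow> complex) set" where
  "crossed_product A = {F. (\<forall>n. F n \<in> A) \<and> finite {n. F n \<noteq> (\<lambda>x. 0)}}"

text \<open>Multiplication: (sum F_n d^n)(sum G_m d^m) = sum_{n,m} F_n sigt^n(G_m) d^(n+m).\<close>
definition cp_mult :: "('a \<Rightarrow> 'a) \<Rightarrow> (int \<Rightarrow> 'a \<Rightarrow> complex) \<Rightarrow> (int \<Rightarrow> 'a \<Rightarrow> complex)
     \<Rightarrow> (int \<Rightarrow> 'a \<Rightarrow> complex)" where
  "cp_mult \<sigma> F G = (\<lambda>k x. \<Sum>n\<in>{n. F n \<noteq> (\<lambda>x. 0)}. F n x * sigt_pow \<sigma> n (G (k - n)) x)"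

definition cp_embed :: "('a \<Rightarrow> complex) \<Rightarrow> (int \<Rightarrow> 'a \<Rightarrow> complex)" where
  "cp_embed f = (\<lambda>n. if n = 0 then f else (\<lambda>x. 0))"

text \<open>A (embedded) is maximal abelian in the crossed product: it is commutative and
  coincides with its commutant (equivalently, no strictly larger commutative subalgebra).\<close>
definition maximal_abelian_in_cp :: "('a \<Rightarrow> 'a) \<Rightarrow> ('a \<Rightarrow> complex) set \<Rightarrow> bool" where
  "maximal_abelian_in_cp \<sigma> A \<longleftrightarrow>
     (\<forall>f\<in>A. \<forall>g\<in>A. cp_mult \<sigma> (cp_embed f) (cp_embed g) = cp_mult \<sigma> (cp_embed g) (cp_embed f))
   \<and> (\<forall>F\<in>crossed_product A.
        (\<forall>f\<in>A. cp_mult \<sigma> F (cp_embed f) = cp_mult \<sigma> (cp_embed f) F)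
        \<longrightarrow> (\<exists>g\<in>A. F = cp_embed g))"

end

theory Submission
  imports Defs
begin

text \<open>If a coefficient \<open>F\<^sub>k\<close> of an element of the commutant of \<open>A\<close> is non-zero, then
  \<open>F\<^sub>k \<cdot> (f \<circ> \<sigma>\<^sup>-\<^sup>k - f) = 0\<close> for all \<open>f \<in> A\<close>; as \<open>A\<close> separates points, \<open>\<sigma>\<^sup>-\<^sup>k\<close> fixes the
  non-empty open set where \<open>F\<^sub>k \<noteq> 0\<close>, so \<open>f \<circ> \<sigma>\<^sup>-\<^sup>k\<close> and \<open>f\<close> agree there, hence everywhere
  because open sets are domains of uniqueness, and separation once more gives \<open>\<sigma>\<^sup>-\<^sup>k = id\<close>.
  So for aperiodic \<open>\<sigma>\<close> the commutant is \<open>A\<close> itself. Conversely, if \<open>\<sigma>\<^sup>n = id\<close> with \<open>n \<noteq> 0\<close>,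
  every monomial \<open>f \<delta>\<^sup>-\<^sup>n\<close> commutes with \<open>A\<close> without lying in \<open>A\<close>.\<close>

lemma subalgebra_diff:
  assumes "subalgebra A" "f \<in> A" "g \<in> A"
  shows "(\<lambda>x. f x - g x) \<in> A"
proof -
  have add: "\<forall>f\<in>A. \<forall>g\<in>A. (\<lambda>x. f x + g x) \<in> A"
    and scale: "\<forall>c. \<forall>f\<in>A. (\<lambda>x. c * f x) \<in> A"
    using assms(1) unfolding subalgebra_def by simp_all
  have "(\<lambda>x. (-1) * g x) \<in> A" using scale assms(3) by blast
  from add[rule_format, OF assms(2) this] show ?thesis by simp
qed

lemma open_nonzero_set:
  assumes "subalgebra A" "f \<in> A"
  shows "open {x. f x \<noteq> 0}"
proof -
  have "continuous_on UNIV f" using assms by (auto simp: subalgebra_def Cfun_def)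
  then show ?thesis by (simp add: continuous_on_eq_continuous_at open_Collect_neq)
qed

lemma eq_on_open_imp_eq:
  assumes "subalgebra A" "\<forall>U. open U \<and> U \<noteq> {} \<longrightarrow> domain_of_uniqueness U A"
    and "f \<in> A" "g \<in> A" "open U" "U \<noteq> {}" "\<forall>x\<in>U. f x = g x"
  shows "f = g"
proof -
  have "domain_of_uniqueness U A" using assms(2,5,6) by blast
  moreover have "(\<lambda>x. f x - g x) \<in> A" using subalgebra_diff assms(1,3,4) .
  ultimately have "\<forall>x. f x - g x = 0" using assms(7) unfolding domain_of_uniqueness_def by auto
  then show ?thesis by auto
qed

lemma fixes_open_set_imp_id:
  assumes "subalgebra A" "separates_points A"
    and "\<forall>U. open U \<and> U \<noteq> {} \<longrightarrow> domain_of_uniqueness U A"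
    and "\<forall>f\<in>A. f \<circ> \<tau> \<in> A"
    and "open U" "U \<noteq> {}" "\<forall>x\<in>U. \<tau> x = x"
  shows "\<tau> = id"
proof
  fix y
  show "\<tau> y = id y"
  proof (rule ccontr)
    assume "\<tau> y \<noteq> id y"
    then obtain f where f: "f \<in> A" "f (\<tau> y) \<noteq> f y"
      using assms(2) by (auto simp: separates_points_def)
    have "f \<circ> \<tau> = f"
      using eq_on_open_imp_eq[OF assms(1,3)] f(1) assms(4-7) by simp
    then show False using f(2) by (metis comp_apply)
  qed
qed

lemma int_pow_of_nat: "int_pow s (int m) = s ^^ m"
  by (simp add: int_pow_def)

lemma int_pow_minus_of_nat: "int_pow s (- int m) = inv s ^^ m"
  by (cases "m = 0") (auto simp: int_pow_def)

lemma sigt_pow_apply: "sigt_pow s n f x = f (int_pow s (-n) x)"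
  by (simp add: sigt_pow_def)

lemma sigt_pow_zero_fun: "sigt_pow s n (\<lambda>x. 0) = (\<lambda>x. 0)"
  by (simp add: sigt_pow_def o_def)

lemma sigt_pow_of_nat_Suc:
  "sigt_pow s (int (Suc m)) f = sigt_pow s 1 (sigt_pow s (int m) f)"
proof -
  have "int_pow s (-1) = inv s" using int_pow_minus_of_nat[of s 1] by simp
  then show ?thesis
    unfolding sigt_pow_def int_pow_minus_of_nat funpow_Suc_right by (simp only: o_assoc)
qed

lemma sigt_pow_minus_of_nat_Suc:
  "sigt_pow s (- int (Suc m)) f = sigt_pow s (-1) (sigt_pow s (- int m) f)"
proof -
  have "int_pow s 1 = s" using int_pow_of_nat[of s 1] by simp
  then show ?thesis
    unfolding sigt_pow_def minus_minus int_pow_of_nat funpow_Suc_right by (simp only: o_assoc)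
qed

lemma sigt_pow_closed:
  assumes "\<forall>f\<in>A. sigt_pow s 1 f \<in> A" "\<forall>f\<in>A. sigt_pow s (-1) f \<in> A" "f \<in> A"
  shows "sigt_pow s k f \<in> A"
proof -
  have sigt_0: "sigt_pow s 0 f = f" by (simp add: sigt_pow_def int_pow_def)
  have pos: "sigt_pow s (int m) f \<in> A" for m
  proof (induction m)
    case 0
    show ?case using assms(3) sigt_0 by simp
  next
    case (Suc m)
    show ?case unfolding sigt_pow_of_nat_Suc using Suc assms(1) by blast
  qed
  have neg: "sigt_pow s (- int m) f \<in> A" for m
  proof (induction m)
    case 0
    show ?case using assms(3) sigt_0 by simp
  next
    case (Suc m)
    show ?case unfolding sigt_pow_minus_of_nat_Suc using Suc assms(2) by blast
  qed
  show ?thesis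
    using pos[of "nat k"] neg[of "nat (- k)"] by (cases "k \<ge> 0") simp_all
qed

definition cp_monomial :: "int \<Rightarrow> ('a \<Rightarrow> complex) \<Rightarrow> (int \<Rightarrow> 'a \<Rightarrow> complex)" where
  "cp_monomial n f = (\<lambda>k. if k = n then f else (\<lambda>x. 0))"

lemma finite_support_cp_monomial: "finite {k. cp_monomial n f k \<noteq> (\<lambda>x. 0)}"
  by (rule finite_subset[of _ "{n}"]) (auto simp: cp_monomial_def)

lemma cp_monomial_in_crossed_product:
  assumes "subalgebra A" "f \<in> A"
  shows "cp_monomial n f \<in> crossed_product A"
  using assms finite_support_cp_monomial
  by (auto simp: crossed_product_def cp_monomial_def subalgebra_def)

lemma cp_mult_embed_right:
  assumes "finite {n. F n \<noteq> (\<lambda>x. 0)}"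
  shows "cp_mult s F (cp_embed f) k x = F k x * sigt_pow s k f x"
proof -
  let ?S = "{n. F n \<noteq> (\<lambda>x. 0)}"
  have "cp_mult s F (cp_embed f) k x = (\<Sum>n\<in>?S. if n = k then F k x * sigt_pow s k f x else 0)"
    unfolding cp_mult_def cp_embed_def by (rule sum.cong) (auto simp: sigt_pow_zero_fun)
  also have "\<dots> = (if k \<in> ?S then F k x * sigt_pow s k f x else 0)"
    using assms by (simp add: sum.delta')
  also have "\<dots> = F k x * sigt_pow s k f x" by auto
  finally show ?thesis .
qed

lemma cp_mult_embed_left: "cp_mult s (cp_embed f) F k x = f x * F k x"
proof (cases "f = (\<lambda>x. 0)")
  case True
  then have "{n. cp_embed f n \<noteq> (\<lambda>x. 0)} = {}" by (auto simp: cp_embed_def)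
  then show ?thesis using True by (simp add: cp_mult_def)
next
  case False
  then have "{n. cp_embed f n \<noteq> (\<lambda>x. 0)} = {0}" by (auto simp: cp_embed_def)
  then show ?thesis by (simp add: cp_mult_def cp_embed_def sigt_pow_def int_pow_def)
qed

lemma commutes_with_embed_iff:
  assumes "finite {n. F n \<noteq> (\<lambda>x. 0)}"
  shows "cp_mult s F (cp_embed f) = cp_mult s (cp_embed f) F \<longleftrightarrow>
    (\<forall>k x. F k x * f (int_pow s (-k) x) = f x * F k x)"
  unfolding fun_eq_iff cp_mult_embed_right[OF assms] cp_mult_embed_left sigt_pow_apply ..

lemma cp_embed_commute: "cp_mult s (cp_embed f) (cp_embed g) = cp_mult s (cp_embed g) (cp_embed f)"
  by (simp only: fun_eq_iff cp_mult_embed_left) (simp add: cp_embed_def)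

lemma commuting_coeff_imp_periodic:
  assumes "subalgebra A" "separates_points A"
    and "\<forall>U. open U \<and> U \<noteq> {} \<longrightarrow> domain_of_uniqueness U A"
    and "\<forall>f\<in>A. sigt_pow \<sigma> 1 f \<in> A" "\<forall>f\<in>A. sigt_pow \<sigma> (-1) f \<in> A"
    and "h \<in> A" "h \<noteq> (\<lambda>x. 0)"
    and commute: "\<forall>f\<in>A. \<forall>x. h x * f (int_pow \<sigma> (-k) x) = f x * h x"
  shows "int_pow \<sigma> (-k) = id"
proof (rule fixes_open_set_imp_id[OF assms(1-3)])
  show "open {x. h x \<noteq> 0}" using open_nonzero_set assms(1,6) .
  show "{x. h x \<noteq> 0} \<noteq> {}" using assms(7) by auto
  show "\<forall>f\<in>A. f \<circ> int_pow \<sigma> (-k) \<in> A"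
    using sigt_pow_closed[OF assms(4,5)] by (simp add: sigt_pow_def)
  show "\<forall>x\<in>{x. h x \<noteq> 0}. int_pow \<sigma> (-k) x = x"
  proof
    fix x assume "x \<in> {x. h x \<noteq> 0}"
    then have "f (int_pow \<sigma> (-k) x) = f x" if "f \<in> A" for f
      using commute that by (auto simp: mult.commute)
    then show "int_pow \<sigma> (-k) x = x"
      using assms(2) unfolding separates_points_def by blast
  qed
qed

lemma maximal_abelian_if_aperiodic:
  assumes "subalgebra A" "separates_points A"
    and "\<forall>U. open U \<and> U \<noteq> {} \<longrightarrow> domain_of_uniqueness U A"
    and "\<forall>f\<in>A. sigt_pow \<sigma> 1 f \<in> A" "\<forall>f\<in>A. sigt_pow \<sigma> (-1) f \<in> A"
    and aperiodic: "\<forall>n::int. n \<noteq> 0 \<longrightarrow> int_pow \<sigma> n \<noteq> id"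
  shows "maximal_abelian_in_cp \<sigma> A"
  unfolding maximal_abelian_in_cp_def
proof (intro conjI ballI impI)
  fix f g
  show "cp_mult \<sigma> (cp_embed f) (cp_embed g) = cp_mult \<sigma> (cp_embed g) (cp_embed f)"
    by (rule cp_embed_commute)
next
  fix F assume "F \<in> crossed_product A"
    and comm: "\<forall>f\<in>A. cp_mult \<sigma> F (cp_embed f) = cp_mult \<sigma> (cp_embed f) F"
  then have fin: "finite {n. F n \<noteq> (\<lambda>x. 0)}" and FA: "\<And>n. F n \<in> A"
    by (auto simp: crossed_product_def)
  have "F k = (\<lambda>x. 0)" if "k \<noteq> 0" for k
  proof (rule ccontr)
    assume "F k \<noteq> (\<lambda>x. 0)"
    moreover have "\<forall>f\<in>A. \<forall>x. F k x * f (int_pow \<sigma> (-k) x) = f x * F k x"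
      using comm commutes_with_embed_iff[OF fin] by blast
    ultimately have "int_pow \<sigma> (-k) = id"
      using commuting_coeff_imp_periodic[OF assms(1-5) FA] by blast
    with aperiodic that show False by simp
  qed
  then show "\<exists>g\<in>A. F = cp_embed g"
    using FA[of 0] by (intro bexI[of _ "F 0"]) (auto simp: cp_embed_def)
qed

lemma not_maximal_abelian_if_periodic:
  assumes "subalgebra A" "f \<in> A" "f \<noteq> (\<lambda>x. 0)" "n \<noteq> 0" "int_pow \<sigma> n = id"
  shows "\<not> maximal_abelian_in_cp \<sigma> A"
proof
  assume M: "maximal_abelian_in_cp \<sigma> A"
  have "cp_monomial (-n) f k x * g (int_pow \<sigma> (-k) x) = g x * cp_monomial (-n) f k x" for g k x
    using assms(5) by (simp add: cp_monomial_def)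
  then have "\<forall>g\<in>A. cp_mult \<sigma> (cp_monomial (-n) f) (cp_embed g) = cp_mult \<sigma> (cp_embed g) (cp_monomial (-n) f)"
    using commutes_with_embed_iff[OF finite_support_cp_monomial] by blast
  then obtain g where g: "cp_monomial (-n) f = cp_embed g"
    using M cp_monomial_in_crossed_product[OF assms(1,2)] unfolding maximal_abelian_in_cp_def by blast
  have "f = (\<lambda>x. 0)"
    using assms(4) fun_cong[OF g, of "-n"] by (simp add: cp_monomial_def cp_embed_def)
  with assms(3) show False ..
qed

theorem theorem3p11:
  fixes \<sigma> :: "'a::topological_space \<Rightarrow> 'a"
    and A :: "('a \<Rightarrow> complex) set"
  assumes "bij \<sigma>" and "continuous_on UNIV \<sigma>" and "continuous_on UNIV (inv \<sigma>)"
    and "subalgebra A"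
    and "\<exists>f\<in>A. f \<noteq> (\<lambda>x. 0)"
    and "\<forall>f\<in>A. sigt_pow \<sigma> 1 f \<in> A"
    and "\<forall>f\<in>A. sigt_pow \<sigma> (-1) f \<in> A"
    and "separates_points A"
    and "\<forall>U. open U \<and> U \<noteq> {} \<longrightarrow> domain_of_uniqueness U A"
  shows "maximal_abelian_in_cp \<sigma> A \<longleftrightarrow> (\<forall>n::int. n \<noteq> 0 \<longrightarrow> int_pow \<sigma> n \<noteq> id)"
proof
  assume "maximal_abelian_in_cp \<sigma> A"
  then show "\<forall>n::int. n \<noteq> 0 \<longrightarrow> int_pow \<sigma> n \<noteq> id"
    using not_maximal_abelian_if_periodic assms(4,5) by blast
next
  assume "\<forall>n::int. n \<noteq> 0 \<longrightarrow> int_pow \<sigma> n \<noteq> id"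
  then show "maximal_abelian_in_cp \<sigma> A"
    using maximal_abelian_if_aperiodic[OF assms(4,8,9,6,7)] by blast
qed

end
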